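(* Let $R_3,R_2,R_1$ be three runs that lie consecutively in $\{1,\dots,n\}$ in this left-to-right order, with no gaps between them. Let $p_3=P(R_3,R_2)$ and $p_2=P(R_2,R_1)$, and suppose $p_3>p_2$. Then $\mathrm{mid}(R_1)-\mathrm{mid}(R_3)\ge n/2^{p_3+1}$.
   Context: Assume $n=2^a-1$ for an integer $a\ge1$. Each index $j\in\{1,\dots,n\}$ has power $\mathrm{pow}(j)=a-1-\nu_2(j)$, where $\nu_2(j)$ is the exponent of $2$ in $j$. Equivalently, $\mathrm{pow}(j)$ is the depth of node $j$ in the perfect binary tree on $\{1,\dots,n\}$ in in-order, so the center has power $0$. A run is a nonempty set of consecutive indices $\{s,\dots,e\}$, and its midpoint is $\mathrm{mid}=(s+e)/2$. For a run $R$ and the run $R'$ immediately to its right, the power of $R$ (relative to $R'$) is $P(R,R')=\min\{\mathrm{pow}(j): j\in\mathbb{Z},\ \mathrm{mid}(R)\le j\le \mathrm{mid}(R')\}$. *)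

theory Defs
  imports Complex_Main "HOL-Computational_Algebra.Primes"
begin

definition nu2 :: "int \<Rightarrow> nat" where
  "nu2 j = multiplicity (2::int) j"

(* power of index j for n = 2^a - 1 *)
definition pow :: "nat \<Rightarrow> int \<Rightarrow> int" where
  "pow a j = int a - 1 - int (nu2 j)"

(* a run {s..e} is represented by its endpoints; midpoint (s+e)/2 *)
definition mid :: "int \<Rightarrow> int \<Rightarrow> real" where
  "mid s e = (real_of_int s + real_of_int e) / 2"

(* power of run {s..e} relative to the run {s'..e'} immediately to its right *)
definition runP :: "nat \<Rightarrow> int \<times> int \<Rightarrow> int \<times> int \<Rightarrow> int" where
  "runP a R R' = Min {pow a j | j. mid (fst R) (snd R) \<le> real_of_int j \<and>
                                   real_of_int j \<le> mid (fst R') (snd R')}"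

end

theory Submission
  imports Defs
begin

text \<open>Both run powers are attained at integers \<open>j\<^sub>3 \<le> mid R\<^sub>2 \<le> j\<^sub>2\<close>, and
  \<open>p\<^sub>3 > p\<^sub>2\<close> says \<open>\<nu>\<^sub>2 j\<^sub>3 < \<nu>\<^sub>2 j\<^sub>2\<close>. Hence \<open>j\<^sub>3 \<noteq> j\<^sub>2\<close> and both are multiples
  of \<open>2^\<nu>\<^sub>2 j\<^sub>3\<close>, so \<open>mid R\<^sub>1 - mid R\<^sub>3 \<ge> j\<^sub>2 - j\<^sub>3 \<ge> 2^\<nu>\<^sub>2 j\<^sub>3\<close>, while
  \<open>n / 2^(p\<^sub>3+1) = (2^a - 1) / 2^(a - \<nu>\<^sub>2 j\<^sub>3) < 2^\<nu>\<^sub>2 j\<^sub>3\<close>.\<close>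

lemma finite_ints_between: "finite {j::int. x \<le> real_of_int j \<and> real_of_int j \<le> y}"
proof (rule finite_subset)
  show "{j::int. x \<le> real_of_int j \<and> real_of_int j \<le> y} \<subseteq> {\<lceil>x\<rceil>..\<lfloor>y\<rfloor>}"
    by (auto simp: ceiling_le_iff le_floor_iff)
qed simp

lemma runP_attained:
  assumes "mid (fst R) (snd R) \<le> real_of_int w" "real_of_int w \<le> mid (fst R') (snd R')"
  obtains j where "mid (fst R) (snd R) \<le> real_of_int j" "real_of_int j \<le> mid (fst R') (snd R')"
    and "runP a R R' = pow a j"
proof -
  let ?J = "{j. mid (fst R) (snd R) \<le> real_of_int j \<and> real_of_int j \<le> mid (fst R') (snd R')}"
  have "runP a R R' = Min (pow a ` ?J)"
    unfolding runP_def by (rule arg_cong[where f = Min]) auto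
  moreover have "Min (pow a ` ?J) \<in> pow a ` ?J"
    using finite_ints_between assms by (intro Min_in) auto
  ultimately show ?thesis
    using that by auto
qed

lemma two_pow_nu2_le_diff:
  assumes "j < j'" and "nu2 j \<le> nu2 j'"
  shows "2 ^ nu2 j \<le> j' - j"
proof -
  have "2 ^ nu2 j dvd j'" and "2 ^ nu2 j dvd j"
    using assms(2) unfolding nu2_def by (auto intro: multiplicity_dvd multiplicity_dvd')
  then have "2 ^ nu2 j dvd j' - j"
    by (rule dvd_diff)
  then show ?thesis
    using assms(1) by (simp add: zdvd_imp_le)
qed

lemma mersenne_div_two_powr_le: "real_of_int (2 ^ a - 1) / 2 powr (real a - real k) \<le> 2 ^ k"
proof -
  have "2 powr (real a - real k) = 2 ^ a / 2 ^ k"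
    by (simp add: powr_diff powr_realpow)
  then show ?thesis
    by (simp add: field_simps)
qed

theorem mainTheorem7:
  fixes a :: nat and n s3 e3 e2 e1 :: int
  assumes "a \<ge> 1"
    and "n = 2 ^ a - 1"
    and "1 \<le> s3" and "s3 \<le> e3" and "e3 < e2" and "e2 < e1" and "e1 \<le> n"
    and "runP a (s3, e3) (e3 + 1, e2) > runP a (e3 + 1, e2) (e2 + 1, e1)"
  shows "mid (e2 + 1) e1 - mid s3 e3 \<ge>
           real_of_int n / 2 powr (real_of_int (runP a (s3, e3) (e3 + 1, e2)) + 1)"
proof -
  obtain j where j: "mid s3 e3 \<le> real_of_int j" "real_of_int j \<le> mid (e3 + 1) e2"
    and p3: "runP a (s3, e3) (e3 + 1, e2) = pow a j"
    using runP_attained[of "(s3, e3)" e3 "(e3 + 1, e2)"] assms(4,5) unfolding mid_def by auto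
  obtain j' where j': "mid (e3 + 1) e2 \<le> real_of_int j'" "real_of_int j' \<le> mid (e2 + 1) e1"
    and p2: "runP a (e3 + 1, e2) (e2 + 1, e1) = pow a j'"
    using runP_attained[of "(e3 + 1, e2)" e2 "(e2 + 1, e1)"] assms(5,6) unfolding mid_def by auto
  have "nu2 j < nu2 j'"
    using assms(8) unfolding p3 p2 pow_def by simp
  moreover from this have "j < j'"
    using j(2) j'(1) by (cases "j = j'") auto
  ultimately have "2 ^ nu2 j \<le> real_of_int j' - real_of_int j"
    using two_pow_nu2_le_diff[of j j'] by (metis less_imp_le of_int_diff of_int_le_iff of_int_numeral of_int_power)
  moreover have "real_of_int (runP a (s3, e3) (e3 + 1, e2)) + 1 = real a - real (nu2 j)"
    unfolding p3 pow_def by simp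
  ultimately show ?thesis
    using mersenne_div_two_powr_le[of a "nu2 j"] assms(2) j(1) j'(2) by auto
qed

end
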